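(* Let $G:\{0,1\}^n\to\{0,1\}$ be a uniformly random function. Let $\mathcal A$ be an unbounded-time algorithm that makes $\mathrm{poly}(n)$ classical queries to $G$, and let $\{z_G\}_G$ be a family of $\mathrm{poly}(n)$-bit classical advice strings. Suppose $$\Pr_{G,\ x\leftarrow\{0,1\}^n}\big[\mathcal A^G(z_G,x)=G(x)\big]>\frac35.$$ Then for all sufficiently large $n$, for at least a $\frac1{30}$ fraction of $x\in\{0,1\}^n$, the probability (over uniform $G$ and the randomness of $\mathcal A$) that $x$ is contained in the list of queries made by $\mathcal A^G(z_G,x)$ is at least $\frac1{20}$.
   Context: Classical queries: the algorithm submits a classical input $y$ and receives $G(y)$. The advice $z_G$ may be an arbitrary function of $G$. *)

theory Defs
  imports Complex_Main "HOL-Library.FuncSet"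
begin

definition bits :: "nat \<Rightarrow> bool list set" where
  "bits n = {xs. length xs = n}"

definition funcs :: "nat \<Rightarrow> (bool list \<Rightarrow> bool) set" where
  "funcs n = bits n \<rightarrow>\<^sub>E (UNIV :: bool set)"

text \<open>A deterministic adaptive classical-query algorithm (decision tree):
  either output a bit, or submit a classical query y and continue depending
  on the answer G(y).\<close>
datatype qtree = Out bool | Qry "bool list" "bool \<Rightarrow> qtree"

primrec run :: "(bool list \<Rightarrow> bool) \<Rightarrow> qtree \<Rightarrow> bool" where
  "run G (Out b) = b"
| "run G (Qry y k) = run G (k (G y))"

primrec queries :: "(bool list \<Rightarrow> bool) \<Rightarrow> qtree \<Rightarrow> bool list list" where
  "queries G (Out b) = []"
| "queries G (Qry y k) = y # queries G (k (G y))"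

primrec depth :: "qtree \<Rightarrow> nat" where
  "depth (Out b) = 0"
| "depth (Qry y k) = Suc (max (depth (k True)) (depth (k False)))"

text \<open>Average of f over a finite set A (uniform probability / expectation).\<close>
definition avg :: "'a set \<Rightarrow> ('a \<Rightarrow> real) \<Rightarrow> real" where
  "avg A f = (\<Sum>a\<in>A. f a) / real (card A)"

definition poly_bounded :: "(nat \<Rightarrow> nat) \<Rightarrow> bool" where
  "poly_bounded p \<longleftrightarrow> (\<exists>c k. \<forall>n. p n \<le> c * (n + 1) ^ k)"

end

theory Submission
  imports Defs "HOL-Real_Asymp.Real_Asymp"
begin

text \<open>Fix the random tape and pick a uniformly random set R of k = 100 m inputs. Run the algorithm
  against hide R G, the oracle that answers False on all of R. For x in R, a run that succeeds
  without querying x succeeds on the hidden oracle too, unless it queries some other point of R;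
  averaged over R this costs at most a Q (k - 1) / (2^n - 1) fraction. The hidden run ignores G on R,
  so for a fixed advice string its number of correct answers on R is distributed as Binomial(k, 1/2),
  and an exponential-moment bound makes 51 percent correct answers exponentially unlikely in m; the
  union bound over fewer than 2^(P+1) advice strings is absorbed once m is large compared with P.
  Hence runs that do not query x succeed with probability barely above 51 percent, and overall
  success above 3/5 forces at least a 1/30 fraction of inputs x to be queried with probability at
  least 1/20.\<close>

lemma length_queries_le_depth: "length (queries G t) \<le> depth t"
proof (induction t)
  case (Qry y k)
  then show ?case
    by (cases "G y") (auto simp: le_max_iff_disj)
qed simp

lemma run_cong_queries:
  "(\<And>y. y \<in> set (queries G t) \<Longrightarrow> G' y = G y) \<Longrightarrow> run G' t = run G t"
  by (induction t) auto

lemma finite_bits: "finite (bits n)"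
  using finite_lists_length_eq[of "UNIV :: bool set" n] by (simp add: bits_def)

lemma card_bits: "card (bits n) = 2 ^ n"
  using card_lists_length_eq[of "UNIV :: bool set" n] by (simp add: bits_def card_UNIV_bool)

lemma finite_funcs: "finite (funcs n)"
  by (simp add: funcs_def finite_PiE finite_bits)

lemma card_funcs: "card (funcs n) = 2 ^ 2 ^ n"
  by (simp add: funcs_def card_PiE finite_bits card_bits)

lemma finite_bool_lists_length_le: "finite {xs :: bool list. length xs \<le> P}"
  using finite_lists_length_le[of "UNIV :: bool set" P] by simp

lemma card_bool_lists_length_le: "card {xs :: bool list. length xs \<le> P} < 2 ^ Suc P"
proof -
  have "(\<Sum>i\<le>P. (2::nat) ^ i) < 2 ^ Suc P"
    by (induction P) auto
  then show ?thesis
    using card_lists_length_le[of "UNIV :: bool set" P] by (simp add: card_UNIV_bool)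
qed

lemma avg_mono: "(\<And>a. a \<in> A \<Longrightarrow> f a \<le> g a) \<Longrightarrow> avg A f \<le> avg A g"
  unfolding avg_def by (intro divide_right_mono sum_mono) auto

lemma avg_add: "avg A (\<lambda>a. f a + g a) = avg A f + avg A g"
  unfolding avg_def by (simp add: sum.distrib add_divide_distrib)

lemma avg_swap: "avg A (\<lambda>a. avg B (f a)) = avg B (\<lambda>b. avg A (\<lambda>a. f a b))"
  unfolding avg_def sum_divide_distrib[symmetric]
  by (simp add: sum.swap[of _ A] divide_divide_eq_left mult.commute)

lemma avg_le_const:
  assumes "finite A" "A \<noteq> {}" "\<And>a. a \<in> A \<Longrightarrow> f a \<le> c"
  shows "avg A f \<le> c"
proof -
  have "sum f A \<le> real (card A) * c"
    using sum_mono[of A f "\<lambda>_. c"] assms(3) by simp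
  then show ?thesis
    using assms(1,2) by (simp add: avg_def divide_le_eq mult.commute)
qed

lemma avg_le_fraction_ge_plus:
  fixes f :: "'a \<Rightarrow> real"
  assumes "finite A" "0 \<le> t" "\<And>a. a \<in> A \<Longrightarrow> f a \<le> 1"
  shows "avg A f \<le> real (card {a \<in> A. t \<le> f a}) / real (card A) + t"
proof (cases "A = {}")
  case False
  have "avg A f \<le> avg A (\<lambda>a. of_bool (t \<le> f a) + t)"
  proof (rule avg_mono)
    fix a assume "a \<in> A"
    with assms(2) assms(3)[of a] show "f a \<le> of_bool (t \<le> f a) + t" by simp
  qed
  also have "\<dots> = real (card {a \<in> A. t \<le> f a}) / real (card A) + t"
    using assms(1) False by (simp add: avg_add avg_def Int_def conj_commute)
  finally show ?thesis .
qed (simp add: avg_def assms(2))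

lemma sum_PiE_power_card_true:
  fixes lam :: real
  assumes "finite I" "R \<subseteq> I"
  shows "(\<Sum>G\<in>I \<rightarrow>\<^sub>E UNIV. lam ^ card {x\<in>R. G x}) = 2 ^ (card I - card R) * (1 + lam) ^ card R"
proof -
  define w where "w = (\<lambda>x b. if x \<in> R \<and> b then lam else 1)"
  have "lam ^ card {x\<in>R. G x} = (\<Prod>x\<in>I. w x (G x))" for G
  proof -
    have "(\<Prod>x\<in>I. w x (G x)) = (\<Prod>x\<in>I \<inter> {x. x \<in> R \<and> G x}. lam)"
      unfolding w_def prod.If_cases[OF assms(1)] by simp
    also have "I \<inter> {x. x \<in> R \<and> G x} = {x\<in>R. G x}"
      using assms(2) by auto
    finally show ?thesis by simp
  qed
  then have "(\<Sum>G\<in>I \<rightarrow>\<^sub>E UNIV. lam ^ card {x\<in>R. G x}) = (\<Prod>x\<in>I. \<Sum>b\<in>UNIV. w x b)"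
    using prod_sum_PiE[OF assms(1), of "\<lambda>_. UNIV" w] by simp
  also have "\<dots> = (\<Prod>x\<in>I. if x \<in> R then 1 + lam else 2)"
    by (rule prod.cong) (auto simp: w_def UNIV_bool)
  also have "\<dots> = (1 + lam) ^ card R * 2 ^ card (I - R)"
    unfolding prod.If_cases[OF assms(1)] using assms(2)
    by (simp add: Int_absorb1 Diff_eq[symmetric] Int_commute)
  finally show ?thesis
    using assms by (simp add: card_Diff_subset finite_subset)
qed

text \<open>Since the guess b ignores G on R, replacing G x by "the guess at x is correct" on R is an
  involution of the function space; so the number of correct guesses on R is distributed like the
  number of True values of a uniform G on R.\<close>
lemma sum_PiE_correct_guesses_eq:
  fixes b :: "('a \<Rightarrow> bool) \<Rightarrow> 'a \<Rightarrow> bool"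
  assumes "R \<subseteq> I"
    and guess_indep: "\<And>G G'. (\<And>y. y \<notin> R \<Longrightarrow> G' y = G y) \<Longrightarrow> b G' = b G"
  shows "(\<Sum>G\<in>I \<rightarrow>\<^sub>E UNIV. h (card {x\<in>R. b G x = G x})) = (\<Sum>G\<in>I \<rightarrow>\<^sub>E UNIV. h (card {x\<in>R. G x}))"
proof -
  define flip where "flip = (\<lambda>G x. if x \<in> R then G x = b G x else G x)"
  have b_flip: "b (flip G) = b G" for G
    by (rule guess_indep) (simp add: flip_def)
  have flip_apply: "flip G x = (if x \<in> R then G x = b G x else G x)" for G x
    by (simp add: flip_def)
  have flip_flip: "flip (flip G) = G" for G
    by (rule ext) (auto simp: flip_apply b_flip)
  have flip_PiE: "flip G \<in> I \<rightarrow>\<^sub>E UNIV" if G: "G \<in> I \<rightarrow>\<^sub>E UNIV" for G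
  proof (rule PiE_I)
    fix x assume "x \<notin> I"
    with assms(1) have "x \<notin> R" by blast
    with PiE_arb[OF G \<open>x \<notin> I\<close>] show "flip G x = undefined"
      by (simp add: flip_apply)
  qed simp
  have "bij_betw flip (I \<rightarrow>\<^sub>E UNIV) (I \<rightarrow>\<^sub>E UNIV)"
    by (rule bij_betw_byWitness[where f' = flip]) (simp_all add: flip_flip flip_PiE image_subset_iff)
  moreover have "{x\<in>R. b G x = G x} = {x\<in>R. flip G x}" for G
    by (auto simp: flip_def)
  ultimately show ?thesis
    using sum.reindex_bij_betw[of flip "I \<rightarrow>\<^sub>E UNIV" "I \<rightarrow>\<^sub>E UNIV" "\<lambda>G. h (card {x\<in>R. G x})"]
    by simp
qed

text \<open>Markov's inequality for 14/13 raised to the number of correct guesses; the resulting base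
  ((1 + 14/13) / 2)^100 / (14/13)^51 is below 199/200.\<close>
lemma card_many_correct_guesses:
  fixes b :: "('a \<Rightarrow> bool) \<Rightarrow> 'a \<Rightarrow> bool"
  assumes "finite I" "R \<subseteq> I" "card R = 100 * m"
    and guess_indep: "\<And>G G'. (\<And>y. y \<notin> R \<Longrightarrow> G' y = G y) \<Longrightarrow> b G' = b G"
  shows "real (card {G \<in> I \<rightarrow>\<^sub>E UNIV. 51 * m \<le> card {x\<in>R. b G x = G x}})
           \<le> 2 ^ card I * (199 / 200) ^ m"
proof -
  define lam :: real where "lam = 14 / 13"
  define F where "F = I \<rightarrow>\<^sub>E (UNIV :: bool set)"
  have finF: "finite F"
    unfolding F_def using assms(1) by (simp add: finite_PiE)
  have indicator_le: "of_bool (51 * m \<le> c) \<le> lam ^ c / lam ^ (51 * m)" for c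
    by (auto simp: lam_def power_increasing)
  have "real (card {G \<in> F. 51 * m \<le> card {x\<in>R. b G x = G x}})
          = (\<Sum>G\<in>F. of_bool (51 * m \<le> card {x\<in>R. b G x = G x}))"
    using finF by (simp add: Int_def)
  also have "\<dots> \<le> (\<Sum>G\<in>F. lam ^ card {x\<in>R. b G x = G x}) / lam ^ (51 * m)"
    unfolding sum_divide_distrib by (intro sum_mono indicator_le)
  also have "\<dots> = 2 ^ (card I - card R) * (1 + lam) ^ card R / lam ^ (51 * m)"
    using sum_PiE_correct_guesses_eq[OF assms(2) guess_indep, where h = "\<lambda>c. lam ^ c"]
      sum_PiE_power_card_true[OF assms(1,2)] by (simp add: F_def)
  also have "\<dots> = 2 ^ card I * (((1 + lam) / 2) ^ 100 / lam ^ 51) ^ m"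
  proof -
    have "card R \<le> card I"
      using assms(1,2) by (rule card_mono)
    then have "(2::real) ^ card I = 2 ^ (card I - card R) * 2 ^ card R"
      by (simp add: power_add[symmetric])
    then show ?thesis
      using assms(3) by (simp add: power_divide power_mult)
  qed
  also have "\<dots> \<le> 2 ^ card I * (199 / 200) ^ m"
    by (intro mult_left_mono power_mono) (simp_all add: lam_def power_divide)
  finally show ?thesis
    unfolding F_def .
qed

lemma card_supersets_of_card:
  assumes "finite A" "S \<subseteq> A" "card S \<le> k"
  shows "card {R. R \<subseteq> A \<and> card R = k \<and> S \<subseteq> R} = (card A - card S) choose (k - card S)"
proof -
  have finS: "finite S"
    using assms(1,2) by (rule finite_subset[rotated])
  have "bij_betw (\<lambda>R. R - S) {R. R \<subseteq> A \<and> card R = k \<and> S \<subseteq> R} {T. T \<subseteq> A - S \<and> card T = k - card S}"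
  proof (rule bij_betw_byWitness[where f' = "\<lambda>T. T \<union> S"])
    show "(\<lambda>R. R - S) ` {R. R \<subseteq> A \<and> card R = k \<and> S \<subseteq> R} \<subseteq> {T. T \<subseteq> A - S \<and> card T = k - card S}"
      using assms(1) finS by (auto simp: card_Diff_subset intro: finite_subset)
    show "(\<lambda>T. T \<union> S) ` {T. T \<subseteq> A - S \<and> card T = k - card S} \<subseteq> {R. R \<subseteq> A \<and> card R = k \<and> S \<subseteq> R}"
    proof
      fix R assume "R \<in> (\<lambda>T. T \<union> S) ` {T. T \<subseteq> A - S \<and> card T = k - card S}"
      then obtain T where T: "T \<subseteq> A - S" "card T = k - card S" "R = T \<union> S"
        by auto
      then have "finite T"
        using assms(1) by (auto intro: finite_subset)
      with T finS assms have "card R = k"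
        by (subst T(3), subst card_Un_disjoint) auto
      with T assms(2) show "R \<in> {R. R \<subseteq> A \<and> card R = k \<and> S \<subseteq> R}"
        by auto
    qed
  qed auto
  then have "card {R. R \<subseteq> A \<and> card R = k \<and> S \<subseteq> R} = card (A - S) choose (k - card S)"
    using assms(1) by (simp add: bij_betw_same_card n_subsets)
  then show ?thesis
    using assms(2) finS by (simp add: card_Diff_subset)
qed

lemma sum_k_subsets_sum:
  fixes f :: "'a \<Rightarrow> real"
  assumes "finite X" "1 \<le> k"
  shows "(\<Sum>R | R \<subseteq> X \<and> card R = k. \<Sum>x\<in>R. f x)
           = real ((card X - 1) choose (k - 1)) * (\<Sum>x\<in>X. f x)"
proof -
  let ?K = "{R. R \<subseteq> X \<and> card R = k}"
  have finK: "finite ?K"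
    using assms(1) by simp
  have "(\<Sum>R\<in>?K. \<Sum>x\<in>R. f x) = (\<Sum>R\<in>?K. \<Sum>x\<in>X. f x * of_bool (x \<in> R))"
    using assms(1) by (intro sum.cong[OF refl]) (auto simp: Int_absorb1)
  also have "\<dots> = (\<Sum>x\<in>X. \<Sum>R\<in>?K. f x * of_bool (x \<in> R))"
    by (rule sum.swap)
  also have "\<dots> = (\<Sum>x\<in>X. f x * real (card {R. R \<subseteq> X \<and> card R = k \<and> x \<in> R}))"
    using finK by (simp add: sum_distrib_left[symmetric] Int_def)
  also have "\<dots> = (\<Sum>x\<in>X. f x * real ((card X - 1) choose (k - 1)))"
  proof (rule sum.cong[OF refl])
    fix x assume "x \<in> X"
    then show "f x * real (card {R. R \<subseteq> X \<and> card R = k \<and> x \<in> R}) = f x * real ((card X - 1) choose (k - 1))"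
      using card_supersets_of_card[OF assms(1), of "{x}" k] assms(2) by simp
  qed
  finally show ?thesis
    by (simp add: sum_distrib_right mult.commute)
qed

lemma card_k_subsets_containing_two_le:
  assumes "finite X" "x \<noteq> y" "2 \<le> k"
  shows "card {R. R \<subseteq> X \<and> card R = k \<and> x \<in> R \<and> y \<in> R} \<le> (card X - 2) choose (k - 2)"
proof (cases "{x, y} \<subseteq> X")
  case True
  have "{R. R \<subseteq> X \<and> card R = k \<and> x \<in> R \<and> y \<in> R} = {R. R \<subseteq> X \<and> card R = k \<and> {x, y} \<subseteq> R}"
    by auto
  moreover have two: "card {x, y} = 2"
    using assms(2) by simp
  ultimately show ?thesis
    using card_supersets_of_card[OF assms(1) True, of k] by (simp only: two assms(3) le_refl)
next
  case False
  then have "{R. R \<subseteq> X \<and> card R = k \<and> x \<in> R \<and> y \<in> R} = {}"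
    by auto
  then show ?thesis
    by (metis card.empty zero_le)
qed

lemma sum_k_subsets_pair_hits_le:
  assumes "finite X" "2 \<le> k"
    and "\<And>x. finite (Q x)" "\<And>x. card (Q x) \<le> q" "\<And>x. x \<notin> Q x"
  shows "(\<Sum>R | R \<subseteq> X \<and> card R = k. \<Sum>x\<in>R. real (card (Q x \<inter> R)))
           \<le> real (card X) * real q * real ((card X - 2) choose (k - 2))"
proof -
  let ?K = "{R. R \<subseteq> X \<and> card R = k}"
  let ?c = "real ((card X - 2) choose (k - 2))"
  have finK: "finite ?K"
    using assms(1) by simp
  have hits: "real (card (Q x \<inter> R)) * of_bool (x \<in> R) = (\<Sum>y\<in>Q x. of_bool (x \<in> R \<and> y \<in> R))"
    for x R
    using assms(3)[of x] by (cases "x \<in> R") simp_all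
  have "(\<Sum>R\<in>?K. \<Sum>x\<in>R. real (card (Q x \<inter> R)))
          = (\<Sum>R\<in>?K. \<Sum>x\<in>X. real (card (Q x \<inter> R)) * of_bool (x \<in> R))"
    using assms(1) by (intro sum.cong[OF refl]) (auto simp: Int_absorb1)
  also have "\<dots> = (\<Sum>R\<in>?K. \<Sum>x\<in>X. \<Sum>y\<in>Q x. of_bool (x \<in> R \<and> y \<in> R))"
    by (simp only: hits)
  also have "\<dots> = (\<Sum>x\<in>X. \<Sum>R\<in>?K. \<Sum>y\<in>Q x. of_bool (x \<in> R \<and> y \<in> R))"
    by (rule sum.swap)
  also have "\<dots> = (\<Sum>x\<in>X. \<Sum>y\<in>Q x. \<Sum>R\<in>?K. of_bool (x \<in> R \<and> y \<in> R))"
    by (rule sum.cong[OF refl], rule sum.swap)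
  also have "\<dots> = (\<Sum>x\<in>X. \<Sum>y\<in>Q x. real (card {R. R \<subseteq> X \<and> card R = k \<and> x \<in> R \<and> y \<in> R}))"
    using finK by (simp add: Int_def)
  also have "\<dots> \<le> (\<Sum>x\<in>X. \<Sum>y\<in>Q x. ?c)"
  proof (intro sum_mono)
    fix x y assume "y \<in> Q x"
    with assms(5) have "x \<noteq> y"
      by blast
    from card_k_subsets_containing_two_le[OF assms(1) this assms(2)]
    show "real (card {R. R \<subseteq> X \<and> card R = k \<and> x \<in> R \<and> y \<in> R}) \<le> ?c"
      by (simp only: of_nat_le_iff)
  qed
  also have "\<dots> \<le> (\<Sum>x\<in>X. real q * ?c)"
    using assms(4) by (intro sum_mono) (simp add: mult_right_mono)
  finally show ?thesis
    by simp
qed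

text \<open>Union bound over the advice strings: if the advice zz G yields at least s correct answers,
  G is counted for some advice string a.\<close>
lemma sum_le_threshold_plus_union_bound:
  fixes C :: "'a \<Rightarrow> 'g \<Rightarrow> nat"
  assumes "finite F" "finite Adv" "\<And>G. G \<in> F \<Longrightarrow> zz G \<in> Adv" "\<And>a G. C a G \<le> k"
  shows "(\<Sum>G\<in>F. real (C (zz G) G))
           \<le> real (card F) * real s + real k * (\<Sum>a\<in>Adv. real (card {G\<in>F. s \<le> C a G}))"
proof -
  have "real (C (zz G) G) \<le> real s + real k * (\<Sum>a\<in>Adv. of_bool (s \<le> C a G))" if "G \<in> F" for G
  proof (cases "s \<le> C (zz G) G")
    case True
    have "1 \<le> (\<Sum>a\<in>Adv. of_bool (s \<le> C a G) :: real)"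
      using member_le_sum[of "zz G" Adv "\<lambda>a. of_bool (s \<le> C a G) :: real"] assms(2,3) that True
      by simp
    then have "real k \<le> real k * (\<Sum>a\<in>Adv. of_bool (s \<le> C a G))"
      by (simp add: mult_le_cancel_left1)
    with assms(4)[of "zz G" G] show ?thesis
      by (smt (verit) of_nat_0_le_iff of_nat_le_iff)
  qed (intro add_increasing2 mult_nonneg_nonneg sum_nonneg; simp)
  then have "(\<Sum>G\<in>F. real (C (zz G) G)) \<le> (\<Sum>G\<in>F. real s + real k * (\<Sum>a\<in>Adv. of_bool (s \<le> C a G)))"
    by (rule sum_mono)
  also have "\<dots> = real (card F) * real s + real k * (\<Sum>G\<in>F. \<Sum>a\<in>Adv. of_bool (s \<le> C a G))"
    by (simp add: sum.distrib sum_distrib_left)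
  also have "(\<Sum>G\<in>F. \<Sum>a\<in>Adv. of_bool (s \<le> C a G)) = (\<Sum>a\<in>Adv. real (card {G\<in>F. s \<le> C a G}))"
    using assms(1) by (subst sum.swap) (simp add: Int_def)
  finally show ?thesis .
qed

definition hide :: "'a set \<Rightarrow> ('a \<Rightarrow> bool) \<Rightarrow> 'a \<Rightarrow> bool" where
  "hide R G y \<longleftrightarrow> G y \<and> y \<notin> R"

lemma hide_cong: "(\<And>y. y \<notin> R \<Longrightarrow> G' y = G y) \<Longrightarrow> hide R G' = hide R G"
  unfolding hide_def by (rule ext) auto

lemma correct_unqueried_le_hidden_plus_hits:
  "of_bool (run G t = G x \<and> x \<notin> set (queries G t))
     \<le> of_bool (run (hide R G) t = G x) + real (card ((set (queries G t) - {x}) \<inter> R))"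
proof (cases "set (queries G t) \<inter> R = {}")
  case True
  then have "run (hide R G) t = run G t"
    by (intro run_cong_queries) (auto simp: hide_def)
  then show ?thesis
    by simp
next
  case False
  show ?thesis
  proof (cases "x \<in> set (queries G t)")
    case False
    with \<open>set (queries G t) \<inter> R \<noteq> {}\<close> have "(set (queries G t) - {x}) \<inter> R \<noteq> {}"
      by blast
    then have "1 \<le> real (card ((set (queries G t) - {x}) \<inter> R))"
      by (simp add: Suc_leI card_gt_0_iff)
    moreover have "of_bool (run G t = G x \<and> x \<notin> set (queries G t)) \<le> (1::real)"
      "0 \<le> (of_bool (run (hide R G) t = G x) :: real)"
      by simp_all
    ultimately show ?thesis
      by linarith
  qed simp
qed

lemma sum_correct_hidden_le:
  fixes T :: "bool list \<Rightarrow> bool list \<Rightarrow> qtree" and zz :: "(bool list \<Rightarrow> bool) \<Rightarrow> bool list"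
  assumes adv: "\<And>G. G \<in> funcs n \<Longrightarrow> length (zz G) \<le> P"
    and R: "R \<subseteq> bits n" "card R = 100 * m"
  shows "(\<Sum>G\<in>funcs n. real (card {x\<in>R. run (hide R G) (T (zz G) x) = G x}))
           \<le> real (card (funcs n)) * (51 * m + 100 * m * 2 ^ Suc P * (199 / 200) ^ m)"
proof -
  let ?Adv = "{a :: bool list. length a \<le> P}"
  let ?C = "\<lambda>a G. card {x\<in>R. run (hide R G) (T a x) = G x}"
  have "?C a G \<le> 100 * m" for a G
    using R finite_subset[OF R(1) finite_bits] by (metis (no_types, lifting) card_mono mem_Collect_eq subsetI)
  then have hidden_le: "(\<Sum>G\<in>funcs n. real (?C (zz G) G))
      \<le> real (card (funcs n)) * real (51 * m) + real (100 * m) * (\<Sum>a\<in>?Adv. real (card {G\<in>funcs n. 51 * m \<le> ?C a G}))"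
    using adv by (intro sum_le_threshold_plus_union_bound finite_funcs finite_bool_lists_length_le) auto
  have "(\<Sum>a\<in>?Adv. real (card {G\<in>funcs n. 51 * m \<le> ?C a G})) \<le> (\<Sum>a\<in>?Adv. real (card (funcs n)) * (199 / 200) ^ m)"
  proof (rule sum_mono)
    fix a
    have "(\<lambda>x. run (hide R G') (T a x)) = (\<lambda>x. run (hide R G) (T a x))"
      if "\<And>y. y \<notin> R \<Longrightarrow> G' y = G y" for G G'
      using hide_cong[of R G' G, OF that] by simp
    from card_many_correct_guesses[OF finite_bits R this]
    show "real (card {G\<in>funcs n. 51 * m \<le> ?C a G}) \<le> real (card (funcs n)) * (199 / 200) ^ m"
      unfolding funcs_def[symmetric] card_bits by (simp add: card_funcs)
  qed
  also have "\<dots> = real (card ?Adv) * (real (card (funcs n)) * (199 / 200) ^ m)"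
    by simp
  also have "\<dots> \<le> 2 ^ Suc P * (real (card (funcs n)) * (199 / 200) ^ m)"
  proof (rule mult_right_mono)
    have "card ?Adv \<le> 2 ^ Suc P"
      using card_bool_lists_length_le[of P] by simp
    then show "real (card ?Adv) \<le> 2 ^ Suc P"
      by (metis of_nat_le_iff of_nat_numeral of_nat_power)
  qed simp
  finally have "real (100 * m) * (\<Sum>a\<in>?Adv. real (card {G\<in>funcs n. 51 * m \<le> ?C a G}))
      \<le> real (100 * m) * (2 ^ Suc P * (real (card (funcs n)) * (199 / 200) ^ m))"
    by (rule mult_left_mono) simp
  with hidden_le show ?thesis
    by (simp add: algebra_simps)
qed

text \<open>Double counting over all k-subsets R of the inputs: each input lies in (N - 1 choose k - 1) of
  them, and each pair of distinct inputs in (N - 2 choose k - 2).\<close>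
lemma sum_correct_unqueried_le:
  fixes T :: "bool list \<Rightarrow> bool list \<Rightarrow> qtree" and zz :: "(bool list \<Rightarrow> bool) \<Rightarrow> bool list"
  assumes depth: "\<And>a x. depth (T a x) \<le> Q"
    and adv: "\<And>G. G \<in> funcs n \<Longrightarrow> length (zz G) \<le> P"
    and "1 \<le> m"
  defines "k \<equiv> 100 * m" and "N \<equiv> 2 ^ n"
  shows "real ((N - 1) choose (k - 1)) *
           (\<Sum>G\<in>funcs n. \<Sum>x\<in>bits n. of_bool (run G (T (zz G) x) = G x \<and> x \<notin> set (queries G (T (zz G) x))))
         \<le> real (N choose k) * real (card (funcs n)) * (51 * real m + real k * 2 ^ Suc P * (199 / 200) ^ m)
           + real (card (funcs n)) * real N * real Q * real ((N - 2) choose (k - 2))"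
proof -
  let ?F = "funcs n" and ?X = "bits n"
  let ?K = "{R. R \<subseteq> ?X \<and> card R = k}"
  let ?t = "\<lambda>G x. T (zz G) x"
  let ?hidden = "\<lambda>R G. real (card {x\<in>R. run (hide R G) (?t G x) = G x})"
  let ?hits = "\<lambda>R G. \<Sum>x\<in>R. real (card ((set (queries G (?t G x)) - {x}) \<inter> R))"
  have k: "1 \<le> k" "2 \<le> k"
    using assms(3) by (simp_all add: k_def)
  have cardX: "card ?X = N"
    by (simp add: N_def card_bits)
  have unqueried_le: "(\<Sum>x\<in>R. of_bool (run G (?t G x) = G x \<and> x \<notin> set (queries G (?t G x))))
      \<le> ?hidden R G + ?hits R G" if "R \<in> ?K" for R G
  proof -
    have "finite R"
      using that finite_subset[OF _ finite_bits] by blast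
    then have "?hidden R G = (\<Sum>x\<in>R. of_bool (run (hide R G) (?t G x) = G x))"
      by (simp add: Int_def)
    then show ?thesis
      by (simp add: sum.distrib[symmetric] sum_mono correct_unqueried_le_hidden_plus_hits)
  qed
  have "real ((N - 1) choose (k - 1)) *
        (\<Sum>G\<in>?F. \<Sum>x\<in>?X. of_bool (run G (?t G x) = G x \<and> x \<notin> set (queries G (?t G x))))
      = (\<Sum>G\<in>?F. \<Sum>R\<in>?K. \<Sum>x\<in>R. of_bool (run G (?t G x) = G x \<and> x \<notin> set (queries G (?t G x))))"
    by (simp add: sum_k_subsets_sum[OF finite_bits k(1)] cardX sum_distrib_left)
  also have "\<dots> \<le> (\<Sum>G\<in>?F. \<Sum>R\<in>?K. ?hidden R G + ?hits R G)"
    by (intro sum_mono unqueried_le)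
  also have "\<dots> = (\<Sum>R\<in>?K. \<Sum>G\<in>?F. ?hidden R G) + (\<Sum>G\<in>?F. \<Sum>R\<in>?K. ?hits R G)"
    by (simp add: sum.distrib sum.swap[of "\<lambda>G R. ?hidden R G"])
  also have "\<dots> \<le> (\<Sum>R\<in>?K. real (card ?F) * (51 * real m + real k * 2 ^ Suc P * (199 / 200) ^ m))
                  + (\<Sum>G\<in>?F. real N * real Q * real ((N - 2) choose (k - 2)))"
  proof (intro add_mono sum_mono)
    show "(\<Sum>G\<in>?F. ?hidden R G) \<le> real (card ?F) * (51 * real m + real k * 2 ^ Suc P * (199 / 200) ^ m)"
      if "R \<in> ?K" for R
      using sum_correct_hidden_le[OF adv, where R = R and m = m and T = T] that by (simp add: k_def)
    show "(\<Sum>R\<in>?K. ?hits R G) \<le> real N * real Q * real ((N - 2) choose (k - 2))" for G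
      using sum_k_subsets_pair_hits_le[OF finite_bits[of n] k(2), of "\<lambda>x. set (queries G (?t G x)) - {x}" Q]
        card_length[THEN order_trans, OF length_queries_le_depth[THEN order_trans, OF depth]]
      by (simp add: cardX card_Diff1_le[THEN order_trans])
  qed
  also have "\<dots> = real (N choose k) * real (card ?F) * (51 * real m + real k * 2 ^ Suc P * (199 / 200) ^ m)
                  + real (card ?F) * real N * real Q * real ((N - 2) choose (k - 2))"
    using n_subsets[OF finite_bits[of n], of k] by (simp add: cardX)
  finally show ?thesis .
qed

lemma real_binomial_absorption:
  assumes "2 \<le> k" "k \<le> N"
  shows "real (N choose k) = real N * real ((N - 1) choose (k - 1)) / real k"
    and "real ((N - 2) choose (k - 2)) = real ((N - 1) choose (k - 1)) * (real k - 1) / (real N - 1)"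
proof -
  show "real (N choose k) = real N * real ((N - 1) choose (k - 1)) / real k"
    using binomial_absorption[of "k - 1" N] assms
    by (simp add: field_simps flip: of_nat_mult)
  have "(N - 1) * ((N - 2) choose (k - 2)) = (k - 1) * ((N - 1) choose (k - 1))"
    using binomial_absorption[of "k - 2" "N - 1"] assms by (simp add: Suc_diff_Suc numeral_2_eq_2)
  then have "real ((N - 1) * ((N - 2) choose (k - 2))) = real ((k - 1) * ((N - 1) choose (k - 1)))"
    by (rule arg_cong)
  with assms show "real ((N - 2) choose (k - 2)) = real ((N - 1) choose (k - 1)) * (real k - 1) / (real N - 1)"
    by (simp add: of_nat_diff field_simps)
qed

lemma avg_correct_unqueried_le:
  fixes T :: "bool list \<Rightarrow> bool list \<Rightarrow> qtree" and zz :: "(bool list \<Rightarrow> bool) \<Rightarrow> bool list"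
  assumes depth: "\<And>a x. depth (T a x) \<le> Q"
    and adv: "\<And>G. G \<in> funcs n \<Longrightarrow> length (zz G) \<le> P"
    and m: "1 \<le> m" "100 * m \<le> 2 ^ n"
  shows "avg (funcs n) (\<lambda>G. avg (bits n) (\<lambda>x. of_bool (run G (T (zz G) x) = G x \<and> x \<notin> set (queries G (T (zz G) x)))))
           \<le> 51 / 100 + 2 ^ Suc P * (199 / 200) ^ m + real Q * (100 * real m - 1) / (2 ^ n - 1)"
    (is "avg ?F (\<lambda>G. avg ?X (?u G)) \<le> ?bound")
proof -
  define k where "k = 100 * m"
  define N :: nat where "N = 2 ^ n"
  define c where "c = real ((N - 1) choose (k - 1))"
  define S where "S = (\<Sum>G\<in>?F. \<Sum>x\<in>?X. ?u G x)"
  have kN: "2 \<le> k" "k \<le> N"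
    using m by (simp_all add: k_def N_def)
  have c_pos: "0 < c"
    using kN by (simp add: c_def)
  have choose_N: "real (N choose k) = real N * c / real k"
    and choose_N2: "real ((N - 2) choose (k - 2)) = c * (real k - 1) / (real N - 1)"
    using real_binomial_absorption[OF kN] by (simp_all add: c_def)
  define B where "B = 2 ^ Suc P * (199 / 200 :: real) ^ m"
  define H where "H = real Q * (100 * real m - 1) / (2 ^ n - 1)"
  have hidden_part: "real (N choose k) * (51 * real m + real k * B) = c * real N * (51 / 100 + B)"
    unfolding choose_N using kN by (simp add: k_def field_simps)
  have hits_part: "real N * real Q * real ((N - 2) choose (k - 2)) = c * real N * H"
    unfolding choose_N2 H_def by (simp add: k_def N_def)
  have "c * S \<le> real (card ?F) * (real (N choose k) * (51 * real m + real k * B))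
                + real (card ?F) * (real N * real Q * real ((N - 2) choose (k - 2)))"
    using sum_correct_unqueried_le[OF depth adv m(1)] unfolding c_def S_def k_def N_def B_def
    by (simp only: mult_ac)
  also have "\<dots> = c * (real (card ?F) * real N * (51 / 100 + B + H))"
    unfolding hidden_part hits_part by algebra
  finally have S_le: "S \<le> (51 / 100 + B + H) * (real (card ?F) * real N)"
    using c_pos by (simp add: mult.commute)
  have avg_eq: "avg ?F (\<lambda>G. avg ?X (?u G)) = S / (real (card ?F) * real N)"
    by (simp add: avg_def S_def N_def card_bits sum_divide_distrib[symmetric] divide_divide_eq_left mult.commute)
  have "0 < real (card ?F) * real N"
    by (simp add: card_funcs N_def)
  with S_le show ?thesis
    unfolding avg_eq B_def[symmetric] H_def[symmetric] by (simp add: pos_divide_le_eq)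
qed

lemma power_199_200_le_half: "(199 / 200 :: real) ^ 200 \<le> 1 / 2"
proof -
  have "(199 / 200 :: real) ^ 200 \<le> exp (- 1 / 200) ^ 200"
    using exp_ge_add_one_self[of "- 1 / 200"] by (intro power_mono) simp_all
  also have "\<dots> = exp (- 1)"
    using exp_of_nat_mult[of 200 "- 1 / 200 :: real"] by simp
  also have "\<dots> \<le> 1 / 2"
    using exp_ge_add_one_self[of 1] by (simp add: exp_minus' field_simps)
  finally show ?thesis .
qed

lemma exists_sample_size:
  fixes P Q n :: nat
  assumes large: "4000000 * (Q + 1) * (P + 12) \<le> (2::nat) ^ n"
  obtains m where "1 \<le> m" "100 * m \<le> 2 ^ n"
    "51 / 100 + 2 ^ Suc P * (199 / 200) ^ m + real Q * (100 * real m - 1) / (2 ^ n - 1) \<le> 31 / 60"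
proof
  txt \<open>With m = 200 j, j at least P + 12 makes the advice term at most 1/2048, and
    20000 j Q at most 2^n makes the collision term at most 1/200.\<close>
  define j where "j = 2 ^ n div (4000000 * (Q + 1))"
  have j_ge: "P + 12 \<le> j"
    using large by (simp add: j_def less_eq_div_iff_mult_less_eq algebra_simps)
  have j_le: "j * (4000000 * (Q + 1)) \<le> 2 ^ n"
    by (simp add: j_def)
  show "1 \<le> 200 * j"
    using j_ge by simp
  show block_le: "100 * (200 * j) \<le> 2 ^ n"
    by (rule order_trans[OF _ j_le]) simp
  have "(199 / 200 :: real) ^ (200 * j) = ((199 / 200) ^ 200) ^ j"
    by (simp add: power_mult)
  also have "\<dots> \<le> (1 / 2) ^ j"
    by (intro power_mono power_199_200_le_half) simp
  also have "\<dots> \<le> (1 / 2) ^ (P + 12)"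
    using j_ge by (intro power_decreasing) simp_all
  finally have "2 ^ Suc P * (199 / 200 :: real) ^ (200 * j) \<le> 2 ^ Suc P * (1 / 2) ^ (P + 12)"
    by (intro mult_left_mono) simp_all
  also have "\<dots> = 1 / 2048"
    by (simp add: power_add power_one_over)
  finally have advice_term: "2 ^ Suc P * (199 / 200 :: real) ^ (200 * j) \<le> 1 / 2048" .
  have "Q * (j * 4000000) \<le> 2 ^ n"
    using j_le by (simp add: algebra_simps)
  then have "real (Q * (j * 4000000)) \<le> real ((2::nat) ^ n)"
    by (simp only: of_nat_le_iff)
  then have "real Q * (real j * 4000000) \<le> 2 ^ n"
    by simp
  moreover have "n \<noteq> 0"
    using block_le j_ge by (cases n) simp_all
  then have "(1::real) < 2 ^ n"
    by (simp add: one_less_power)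
  ultimately have "200 * (real Q * (100 * real (200 * j) - 1)) \<le> 2 ^ n - 1"
    by (cases "Q = 0") (simp_all add: algebra_simps)
  then have "real Q * (100 * real (200 * j) - 1) / (2 ^ n - 1) \<le> 1 / 200"
    using \<open>1 < 2 ^ n\<close> by (simp add: divide_le_eq)
  with advice_term show "51 / 100 + 2 ^ Suc P * (199 / 200) ^ (200 * j)
      + real Q * (100 * real (200 * j) - 1) / (2 ^ n - 1) \<le> 31 / 60"
    by simp
qed

lemma poly_bounded_affine_product:
  assumes "poly_bounded q" "poly_bounded p"
  shows "poly_bounded (\<lambda>n. a * (q n + 1) * (p n + b))"
proof -
  obtain c i where q: "\<And>n. q n \<le> c * (n + 1) ^ i"
    using assms(1) by (auto simp: poly_bounded_def)
  obtain d j where p: "\<And>n. p n \<le> d * (n + 1) ^ j"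
    using assms(2) by (auto simp: poly_bounded_def)
  have "a * (q n + 1) * (p n + b) \<le> a * (c + 1) * (d + b) * (n + 1) ^ (i + j)" for n
  proof -
    have "1 * 1 \<le> 1 * (n + 1) ^ i" "b \<le> b * (n + 1) ^ j"
      by simp_all
    from add_mono[OF q[of n] this(1)] add_mono[OF p[of n] this(2)]
    have "q n + 1 \<le> (c + 1) * (n + 1) ^ i" "p n + b \<le> (d + b) * (n + 1) ^ j"
      by (simp_all add: distrib_right)
    then have "a * (q n + 1) * (p n + b) \<le> a * ((c + 1) * (n + 1) ^ i) * ((d + b) * (n + 1) ^ j)"
      by (intro mult_mono mult_le_mono2) simp_all
    also have "\<dots> = a * (c + 1) * (d + b) * (n + 1) ^ (i + j)"
      by (simp add: power_add algebra_simps)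
    finally show ?thesis .
  qed
  then show ?thesis
    unfolding poly_bounded_def by blast
qed

lemma poly_bounded_eventually_le_exp:
  assumes "poly_bounded f"
  shows "\<forall>\<^sub>F n in sequentially. f n \<le> 2 ^ n"
proof -
  obtain c k where f: "\<And>n. f n \<le> c * (n + 1) ^ k"
    using assms by (auto simp: poly_bounded_def)
  have "filterlim (\<lambda>n::nat. 2 ^ n / (real n + 1) ^ k) at_top at_top"
    by real_asymp
  then have "\<forall>\<^sub>F n in sequentially. real c \<le> 2 ^ n / (real n + 1) ^ k"
    by (simp add: filterlim_at_top)
  then show ?thesis
  proof eventually_elim
    case (elim n)
    then have "real (c * (n + 1) ^ k) \<le> real (2 ^ n)"
      by (simp add: pos_le_divide_eq add.commute)
    then show ?case
      using f[of n] of_nat_le_iff le_trans by blast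
  qed
qed

lemma many_inputs_queried_often:
  fixes T :: "bool list \<Rightarrow> bool list \<Rightarrow> bool list \<Rightarrow> qtree" and zz :: "(bool list \<Rightarrow> bool) \<Rightarrow> bool list"
  assumes depth: "\<And>a x r. depth (T a x r) \<le> Q"
    and adv: "\<And>G. G \<in> funcs n \<Longrightarrow> length (zz G) \<le> P"
    and success: "avg (funcs n) (\<lambda>G. avg (bits n) (\<lambda>x. avg (bits l)
                    (\<lambda>r. if run G (T (zz G) x r) = G x then 1 else 0))) > 3 / 5"
    and large: "4000000 * (Q + 1) * (P + 12) \<le> (2::nat) ^ n"
  shows "real (card {x \<in> bits n. avg (funcs n) (\<lambda>G. avg (bits l)
           (\<lambda>r. if x \<in> set (queries G (T (zz G) x r)) then 1 else 0)) \<ge> 1 / 20})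
         \<ge> real (card (bits n)) / 30"
proof -
  let ?F = "funcs n" and ?X = "bits n" and ?L = "bits l"
  let ?queried = "\<lambda>x G r. if x \<in> set (queries G (T (zz G) x r)) then 1 else 0 :: real"
  let ?unqueried = "\<lambda>G x r. of_bool (run G (T (zz G) x r) = G x \<and> x \<notin> set (queries G (T (zz G) x r))) :: real"
  let ?often = "{x \<in> ?X. 1 / 20 \<le> avg ?F (\<lambda>G. avg ?L (?queried x G))}"
  obtain m where m: "1 \<le> m" "100 * m \<le> 2 ^ n"
    and bound: "51 / 100 + 2 ^ Suc P * (199 / 200) ^ m + real Q * (100 * real m - 1) / (2 ^ n - 1) \<le> 31 / 60"
    using exists_sample_size[OF large] .
  have nonempty: "?F \<noteq> {}" "?L \<noteq> {}"
    using card_funcs[of n] card_bits[of l] by auto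
  have "avg ?F (\<lambda>G. avg ?X (\<lambda>x. avg ?L (?unqueried G x))) = avg ?L (\<lambda>r. avg ?F (\<lambda>G. avg ?X (\<lambda>x. ?unqueried G x r)))"
    by (simp only: avg_swap[of ?X]) (rule avg_swap)
  also have "\<dots> \<le> 31 / 60"
  proof (rule avg_le_const[OF finite_bits nonempty(2)])
    fix r
    from avg_correct_unqueried_le[where T = "\<lambda>a x. T a x r" and zz = zz, OF depth adv m] bound
    show "avg ?F (\<lambda>G. avg ?X (\<lambda>x. ?unqueried G x r)) \<le> 31 / 60"
      by linarith
  qed
  finally have unqueried: "avg ?F (\<lambda>G. avg ?X (\<lambda>x. avg ?L (?unqueried G x))) \<le> 31 / 60" .
  have "avg ?F (\<lambda>G. avg ?X (\<lambda>x. avg ?L (?queried x G))) = avg ?X (\<lambda>x. avg ?F (\<lambda>G. avg ?L (?queried x G)))"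
    by (rule avg_swap)
  also have "\<dots> \<le> real (card ?often) / real (card ?X) + 1 / 20"
    using nonempty by (intro avg_le_fraction_ge_plus finite_bits avg_le_const finite_funcs finite_bits) auto
  finally have queried: "avg ?F (\<lambda>G. avg ?X (\<lambda>x. avg ?L (?queried x G))) \<le> real (card ?often) / real (card ?X) + 1 / 20" .
  have "3 / 5 < avg ?F (\<lambda>G. avg ?X (\<lambda>x. avg ?L (\<lambda>r. ?unqueried G x r + ?queried x G r)))"
    using success by (rule less_le_trans) (intro avg_mono; simp)
  also have "\<dots> = avg ?F (\<lambda>G. avg ?X (\<lambda>x. avg ?L (?unqueried G x))) + avg ?F (\<lambda>G. avg ?X (\<lambda>x. avg ?L (?queried x G)))"
    by (simp only: avg_add)
  finally have "1 / 30 < real (card ?often) / real (card ?X)"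
    using unqueried queried by linarith
  then show ?thesis
    by (simp add: card_bits field_simps)
qed

theorem lemma4p2:
  fixes A :: "nat \<Rightarrow> bool list \<Rightarrow> bool list \<Rightarrow> bool list \<Rightarrow> qtree"
    and z :: "nat \<Rightarrow> (bool list \<Rightarrow> bool) \<Rightarrow> bool list"
    and q p m :: "nat \<Rightarrow> nat"
  assumes q_poly: "poly_bounded q"
    and p_poly: "poly_bounded p"
    and queries_bound: "\<And>n a x r. depth (A n a x r) \<le> q n"
    and advice_len: "\<And>n G. G \<in> funcs n \<Longrightarrow> length (z n G) \<le> p n"
    and success: "\<And>n. avg (funcs n) (\<lambda>G. avg (bits n) (\<lambda>x. avg (bits (m n))
                     (\<lambda>r. if run G (A n (z n G) x r) = G x then 1 else 0))) > 3 / 5"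
  shows "\<exists>N. \<forall>n\<ge>N.
           real (card {x \<in> bits n. avg (funcs n) (\<lambda>G. avg (bits (m n))
                  (\<lambda>r. if x \<in> set (queries G (A n (z n G) x r)) then 1 else 0)) \<ge> 1 / 20})
           \<ge> real (card (bits n)) / 30"
proof -
  have "poly_bounded (\<lambda>n. 4000000 * (q n + 1) * (p n + 12))"
    using q_poly p_poly by (rule poly_bounded_affine_product)
  then obtain N where "\<And>n. n \<ge> N \<Longrightarrow> 4000000 * (q n + 1) * (p n + 12) \<le> (2::nat) ^ n"
    using poly_bounded_eventually_le_exp by (auto simp: eventually_sequentially)
  then show ?thesis
    using many_inputs_queried_often[OF queries_bound advice_len success] by blast
qed

end
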